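(* Weak sd-stability does not imply claimwise stability: there exist a set $N$ of $n$ agents and a set $O$ of $n$ objects with strict preferences $\succ_i$ over $O$ and strict priorities $\succ_o$ over $N$, and a random matching $p$ that is weakly sd-stable but not claimwise stable.
   Context: A random matching is an $n\times n$ bistochastic matrix $p=[p(i,o)]$; it is deterministic if entries are in $\{0,1\}$. $p$ is claimwise stable if for each $(i,o)\in N\times O$ and each $j\in N$ with $i\succ_o j$, $\sum_{o':o'\succ_i o}p(i,o')\ge p(j,o)$. For agent $i$ with $o_1\succ_i\dots\succ_i o_n$, $p(i)\succsim_i^{sd}q(i)$ if $\sum_{l=1}^k p(i,o_l)\ge\sum_{l=1}^k q(i,o_l)$ for all $k$, and $p(i)\succ_i^{sd}q(i)$ if additionally $p(i)\neq q(i)$; for object $o$ with $i_1\succ_o\dots\succ_o i_n$, $p(o)\succsim_o^{sd}q(o)$ if $\sum_{l=1}^k p(i_l,o)\ge\sum_{l=1}^k q(i_l,o)$ for all $k$, and $p(o)\succ_o^{sd}q(o)$ if additionally $p(o)\neq q(o)$. $p$ is strongly sd-blocked by $(i,o)$ if there is a deterministic matching $q\ne p$ with $q(i,o)=1$, $q(i)\succ_i^{sd}p(i)$ and $q(o)\succ_o^{sd}p(o)$. $p$ is weakly sd-stable if no pair $(i,o)$ strongly sd-blocks $p$. *)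

theory Defs
  imports Complex_Main
begin

text \<open>Agents N = {0..<n} and objects O = {0..<n}.
  pref i ob ob' means ob \<succ>_i ob' (agent i strictly prefers object ob to ob').
  prio ob i j means i \<succ>_o j (object ob gives i strictly higher priority than j).
  A random matching is p :: nat \<Rightarrow> nat \<Rightarrow> real, p i ob the probability that i gets ob.\<close>

definition strict_total_on :: "nat set \<Rightarrow> (nat \<Rightarrow> nat \<Rightarrow> bool) \<Rightarrow> bool" where
  "strict_total_on A R \<longleftrightarrow>
     (\<forall>x\<in>A. \<not> R x x) \<and>
     (\<forall>x\<in>A. \<forall>y\<in>A. \<forall>z\<in>A. R x y \<longrightarrow> R y z \<longrightarrow> R x z) \<and>
     (\<forall>x\<in>A. \<forall>y\<in>A. x \<noteq> y \<longrightarrow> R x y \<or> R y x)"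

definition strict_prefs :: "nat \<Rightarrow> (nat \<Rightarrow> nat \<Rightarrow> nat \<Rightarrow> bool) \<Rightarrow> bool" where
  "strict_prefs n pref \<longleftrightarrow> (\<forall>i<n. strict_total_on {0..<n} (pref i))"

definition strict_prios :: "nat \<Rightarrow> (nat \<Rightarrow> nat \<Rightarrow> nat \<Rightarrow> bool) \<Rightarrow> bool" where
  "strict_prios n prio \<longleftrightarrow> (\<forall>ob<n. strict_total_on {0..<n} (prio ob))"

definition bistochastic :: "nat \<Rightarrow> (nat \<Rightarrow> nat \<Rightarrow> real) \<Rightarrow> bool" where
  "bistochastic n p \<longleftrightarrow>
     (\<forall>i<n. \<forall>ob<n. p i ob \<ge> 0) \<and>
     (\<forall>i<n. (\<Sum>ob<n. p i ob) = 1) \<and>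
     (\<forall>ob<n. (\<Sum>i<n. p i ob) = 1)"

definition deterministic :: "nat \<Rightarrow> (nat \<Rightarrow> nat \<Rightarrow> real) \<Rightarrow> bool" where
  "deterministic n q \<longleftrightarrow> bistochastic n q \<and> (\<forall>i<n. \<forall>ob<n. q i ob = 0 \<or> q i ob = 1)"

definition claimwise_stable ::
  "nat \<Rightarrow> (nat \<Rightarrow> nat \<Rightarrow> nat \<Rightarrow> bool) \<Rightarrow> (nat \<Rightarrow> nat \<Rightarrow> nat \<Rightarrow> bool) \<Rightarrow> (nat \<Rightarrow> nat \<Rightarrow> real) \<Rightarrow> bool" where
  "claimwise_stable n pref prio p \<longleftrightarrow>
     (\<forall>i<n. \<forall>ob<n. \<forall>j<n. prio ob i j \<longrightarrow>
        (\<Sum>ob'\<in>{ob'. ob' < n \<and> pref i ob' ob}. p i ob') \<ge> p j ob)"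

text \<open>First-order stochastic dominance. Summing over the top-k objects for all k is the same
  as summing over every upper contour set {ob'. ob' = ob or ob' \<succ> ob}.\<close>

definition sd_agent_weak ::
  "nat \<Rightarrow> (nat \<Rightarrow> nat \<Rightarrow> nat \<Rightarrow> bool) \<Rightarrow> nat \<Rightarrow> (nat \<Rightarrow> nat \<Rightarrow> real) \<Rightarrow> (nat \<Rightarrow> nat \<Rightarrow> real) \<Rightarrow> bool" where
  "sd_agent_weak n pref i p q \<longleftrightarrow>
     (\<forall>ob<n. (\<Sum>ob'\<in>{ob'. ob' < n \<and> (ob' = ob \<or> pref i ob' ob)}. p i ob')
           \<ge> (\<Sum>ob'\<in>{ob'. ob' < n \<and> (ob' = ob \<or> pref i ob' ob)}. q i ob'))"

definition sd_agent_strict ::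
  "nat \<Rightarrow> (nat \<Rightarrow> nat \<Rightarrow> nat \<Rightarrow> bool) \<Rightarrow> nat \<Rightarrow> (nat \<Rightarrow> nat \<Rightarrow> real) \<Rightarrow> (nat \<Rightarrow> nat \<Rightarrow> real) \<Rightarrow> bool" where
  "sd_agent_strict n pref i p q \<longleftrightarrow>
     sd_agent_weak n pref i p q \<and> (\<exists>ob<n. p i ob \<noteq> q i ob)"

definition sd_object_weak ::
  "nat \<Rightarrow> (nat \<Rightarrow> nat \<Rightarrow> nat \<Rightarrow> bool) \<Rightarrow> nat \<Rightarrow> (nat \<Rightarrow> nat \<Rightarrow> real) \<Rightarrow> (nat \<Rightarrow> nat \<Rightarrow> real) \<Rightarrow> bool" where
  "sd_object_weak n prio ob p q \<longleftrightarrow>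
     (\<forall>i<n. (\<Sum>j\<in>{j. j < n \<and> (j = i \<or> prio ob j i)}. p j ob)
           \<ge> (\<Sum>j\<in>{j. j < n \<and> (j = i \<or> prio ob j i)}. q j ob))"

definition sd_object_strict ::
  "nat \<Rightarrow> (nat \<Rightarrow> nat \<Rightarrow> nat \<Rightarrow> bool) \<Rightarrow> nat \<Rightarrow> (nat \<Rightarrow> nat \<Rightarrow> real) \<Rightarrow> (nat \<Rightarrow> nat \<Rightarrow> real) \<Rightarrow> bool" where
  "sd_object_strict n prio ob p q \<longleftrightarrow>
     sd_object_weak n prio ob p q \<and> (\<exists>i<n. p i ob \<noteq> q i ob)"

definition strongly_sd_blocks ::
  "nat \<Rightarrow> (nat \<Rightarrow> nat \<Rightarrow> nat \<Rightarrow> bool) \<Rightarrow> (nat \<Rightarrow> nat \<Rightarrow> nat \<Rightarrow> bool) \<Rightarrow> (nat \<Rightarrow> nat \<Rightarrow> real) \<Rightarrow> nat \<Rightarrow> nat \<Rightarrow> bool" where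
  "strongly_sd_blocks n pref prio p i ob \<longleftrightarrow>
     (\<exists>q. deterministic n q \<and> (\<exists>a<n. \<exists>b<n. q a b \<noteq> p a b) \<and> q i ob = 1 \<and>
          sd_agent_strict n pref i q p \<and> sd_object_strict n prio ob q p)"

definition weakly_sd_stable ::
  "nat \<Rightarrow> (nat \<Rightarrow> nat \<Rightarrow> nat \<Rightarrow> bool) \<Rightarrow> (nat \<Rightarrow> nat \<Rightarrow> nat \<Rightarrow> bool) \<Rightarrow> (nat \<Rightarrow> nat \<Rightarrow> real) \<Rightarrow> bool" where
  "weakly_sd_stable n pref prio p \<longleftrightarrow>
     (\<forall>i<n. \<forall>ob<n. \<not> strongly_sd_blocks n pref prio p i ob)"

end

theory Submission
  imports Defs
begin

text \<open>Agent i ranks the objects i, i+1, i+2 (mod 3), object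
  ob ranks the agents ob+1, ob, ob+2, and p is the uniform matching. Since p has full support,
  an sd-improvement for an agent (an object) must give it its top choice with certainty. A
  blocking pair (i, ob) would thus consist of i and its top object, with i the top agent of ob;
  but the top agent of object i is i+1. Claimwise stability fails because agent 0, who has
  top priority over agent 2 at object 0, has no better object than 0 to secure its claim against
  the 1/3 that agent 2 receives of object 0.\<close>

lemma sum_eq_one_imp_others_zero:
  fixes f :: "'a \<Rightarrow> real"
  assumes "finite A" "\<forall>x\<in>A. f x \<ge> 0" "sum f A = 1" "a \<in> A" "f a = 1" "b \<in> A" "b \<noteq> a"
  shows "f b = 0"
proof -
  have "sum f (A - {a}) = 0"
    using assms(1,3-5) sum.remove[of A a f] by simp
  then show ?thesis
    using assms sum_nonneg_eq_0_iff[of "A - {a}" f] by auto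
qed

lemma deterministic_row_zero:
  assumes "deterministic n q" "q i ob = 1" "i < n" "ob < n" "b < n" "b \<noteq> ob"
  shows "q i b = 0"
  using assms sum_eq_one_imp_others_zero[of "{..<n}" "q i" ob b]
  unfolding deterministic_def bistochastic_def by auto

lemma deterministic_column_zero:
  assumes "deterministic n q" "q i ob = 1" "i < n" "ob < n" "j < n" "j \<noteq> i"
  shows "q j ob = 0"
  using assms sum_eq_one_imp_others_zero[of "{..<n}" "\<lambda>j. q j ob" i j]
  unfolding deterministic_def bistochastic_def by auto

lemma sd_agent_weak_top_ge:
  assumes "sd_agent_weak n pref i q p" "ob < n" "\<forall>ob'<n. \<not> pref i ob' ob"
  shows "p i ob \<le> q i ob"
proof -
  have "{ob'. ob' < n \<and> (ob' = ob \<or> pref i ob' ob)} = {ob}"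
    using assms(2,3) by auto
  moreover have "(\<Sum>ob'\<in>{ob'. ob' < n \<and> (ob' = ob \<or> pref i ob' ob)}. p i ob')
      \<le> (\<Sum>ob'\<in>{ob'. ob' < n \<and> (ob' = ob \<or> pref i ob' ob)}. q i ob')"
    using assms(1,2) unfolding sd_agent_weak_def by blast
  ultimately show ?thesis
    by simp
qed

lemma sd_object_weak_top_ge:
  assumes "sd_object_weak n prio ob q p" "i < n" "\<forall>j<n. \<not> prio ob j i"
  shows "p i ob \<le> q i ob"
proof -
  have "{j. j < n \<and> (j = i \<or> prio ob j i)} = {i}"
    using assms(2,3) by auto
  moreover have "(\<Sum>j\<in>{j. j < n \<and> (j = i \<or> prio ob j i)}. p j ob)
      \<le> (\<Sum>j\<in>{j. j < n \<and> (j = i \<or> prio ob j i)}. q j ob)"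
    using assms(1,2) unfolding sd_object_weak_def by blast
  ultimately show ?thesis
    by simp
qed

lemma weakly_sd_stable_if_tops_mismatch:
  assumes pos: "\<forall>i<n. \<forall>ob<n. p i ob > 0"
    and top_obj: "\<forall>i<n. top_obj i < n \<and> (\<forall>ob<n. \<not> pref i ob (top_obj i))"
    and top_agent: "\<forall>ob<n. top_agent ob < n \<and> (\<forall>j<n. \<not> prio ob j (top_agent ob))"
    and mismatch: "\<forall>i<n. top_agent (top_obj i) \<noteq> i"
  shows "weakly_sd_stable n pref prio p"
  unfolding weakly_sd_stable_def
proof (intro allI impI notI)
  fix i ob
  assume i: "i < n" and ob: "ob < n" and "strongly_sd_blocks n pref prio p i ob"
  then obtain q where q: "deterministic n q" "q i ob = 1"
    and agent: "sd_agent_weak n pref i q p" and object: "sd_object_weak n prio ob q p"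
    unfolding strongly_sd_blocks_def sd_agent_strict_def sd_object_strict_def by blast
  have top_obj_i: "top_obj i < n" "\<forall>ob'<n. \<not> pref i ob' (top_obj i)"
    using top_obj i by auto
  have "0 < p i (top_obj i)"
    using pos i top_obj_i(1) by blast
  also have "\<dots> \<le> q i (top_obj i)"
    using sd_agent_weak_top_ge[OF agent top_obj_i] .
  finally have obj_match: "top_obj i = ob"
    using deterministic_row_zero[OF q i ob top_obj_i(1)] by fastforce
  have top_agent_ob: "top_agent ob < n" "\<forall>j<n. \<not> prio ob j (top_agent ob)"
    using top_agent ob by auto
  have "0 < p (top_agent ob) ob"
    using pos ob top_agent_ob(1) by blast
  also have "\<dots> \<le> q (top_agent ob) ob"
    using sd_object_weak_top_ge[OF object top_agent_ob] .
  finally have "top_agent ob = i"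
    using deterministic_column_zero[OF q i ob top_agent_ob(1)] by fastforce
  with obj_match show False
    using mismatch i by blast
qed

lemma not_claimwise_stable_if_top_choice_claimed:
  assumes "i < n" "j < n" "ob < n" "\<forall>ob'<n. \<not> pref i ob' ob" "prio ob i j" "p j ob > 0"
  shows "\<not> claimwise_stable n pref prio p"
proof -
  have no_better: "{ob'. ob' < n \<and> pref i ob' ob} = {}"
    using assms(4) by auto
  have "\<not> (\<Sum>ob'\<in>{ob'. ob' < n \<and> pref i ob' ob}. p i ob') \<ge> p j ob"
    unfolding no_better using assms(6) by simp
  then show ?thesis
    using assms(1-3,5) unfolding claimwise_stable_def by blast
qed

definition cyclic_pref :: "nat \<Rightarrow> nat \<Rightarrow> nat \<Rightarrow> bool" where
  "cyclic_pref i a b \<longleftrightarrow> (a + 3 - i) mod 3 < (b + 3 - i) mod 3"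

definition cyclic_prio :: "nat \<Rightarrow> nat \<Rightarrow> nat \<Rightarrow> bool" where
  "cyclic_prio ob a b \<longleftrightarrow> (ob + 4 - a) mod 3 < (ob + 4 - b) mod 3"

definition uniform_matching :: "nat \<Rightarrow> nat \<Rightarrow> real" where
  "uniform_matching i ob = 1 / 3"

lemma less_3_cases: "(x::nat) < 3 \<longleftrightarrow> x = 0 \<or> x = 1 \<or> x = 2"
  by auto

lemma all_less_3: "(\<forall>x<3::nat. P x) \<longleftrightarrow> P 0 \<and> P 1 \<and> P 2"
  unfolding less_3_cases by blast

lemma ball_atLeastLessThan_3: "(\<forall>x\<in>{0..<3::nat}. P x) \<longleftrightarrow> P 0 \<and> P 1 \<and> P 2"
  by (simp only: atLeast0LessThan Ball_def lessThan_iff all_less_3)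

lemma sum_lessThan_3: "(\<Sum>x<3::nat. f x) = f 0 + f 1 + (f 2 :: real)"
  by (simp add: numeral_3_eq_3 numeral_2_eq_2 lessThan_Suc)

lemma strict_prefs_cyclic: "strict_prefs 3 cyclic_pref"
  unfolding strict_prefs_def strict_total_on_def all_less_3 ball_atLeastLessThan_3 cyclic_pref_def
  by simp

lemma strict_prios_cyclic: "strict_prios 3 cyclic_prio"
  unfolding strict_prios_def strict_total_on_def all_less_3 ball_atLeastLessThan_3 cyclic_prio_def
  by simp

lemma bistochastic_uniform: "bistochastic 3 uniform_matching"
  unfolding bistochastic_def all_less_3 sum_lessThan_3 uniform_matching_def by simp

lemma weakly_sd_stable_uniform: "weakly_sd_stable 3 cyclic_pref cyclic_prio uniform_matching"
  by (rule weakly_sd_stable_if_tops_mismatch[where top_obj = id and top_agent = "\<lambda>ob. (ob + 1) mod 3"])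
    (auto simp: all_less_3 uniform_matching_def cyclic_pref_def cyclic_prio_def)

lemma not_claimwise_stable_uniform: "\<not> claimwise_stable 3 cyclic_pref cyclic_prio uniform_matching"
  by (rule not_claimwise_stable_if_top_choice_claimed[where i = 0 and j = 2 and ob = 0])
    (auto simp: all_less_3 uniform_matching_def cyclic_pref_def cyclic_prio_def)

theorem proposition34:
  shows "\<exists>(n::nat) pref prio (p::nat \<Rightarrow> nat \<Rightarrow> real).
           strict_prefs n pref \<and> strict_prios n prio \<and> bistochastic n p \<and>
           weakly_sd_stable n pref prio p \<and> \<not> claimwise_stable n pref prio p"
  using strict_prefs_cyclic strict_prios_cyclic bistochastic_uniform
    weakly_sd_stable_uniform not_claimwise_stable_uniform by blast

end
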